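(* Let $N\in\mathbb N$, $F=\mathbb Z/N\mathbb Z$, and let $\sigma\in G_F$ have at most four blocks, i.e. $|\{f\in F:\sigma_f\neq\sigma_{f+1}\}|\le 4$. Then $D_{\rm stab}(\sigma)=D_{\rm sym}(\sigma)$.
   Context: $G_F=\{-1,1\}^F$, $A_F(\sigma)_f=\sum_{\ell\in F}\sigma_\ell\sigma_{\ell+f}$, $D_{\rm stab}(\sigma)=|\{\tau\in G_F: A_F(\tau)=A_F(\sigma)\}|$. The group $\mathcal S_F=\{-1,1\}\times(F\rtimes\{-1,1\})$ acts on $G_F$ by $\Phi_{(s,t,r)}(\sigma)_f=s\,\sigma_{rf+t}$ ($s,r\in\{-1,1\}$, $t\in F$), and $D_{\rm sym}(\sigma)$ is the cardinality of the orbit of $\sigma$ under this action. *)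

theory Defs
  imports Main "HOL-Library.FuncSet"
begin

text \<open>F = Z/NZ is represented by {0..<N} with arithmetic mod N.
  G_F = functions {0..<N} -> {-1,1} (extensional: undefined outside).\<close>

definition GF :: "nat \<Rightarrow> (nat \<Rightarrow> int) set" where
  "GF N = {0..<N} \<rightarrow>\<^sub>E {-1, 1}"

definition autocorr :: "nat \<Rightarrow> (nat \<Rightarrow> int) \<Rightarrow> (nat \<Rightarrow> int)" where
  "autocorr N \<sigma> = (\<lambda>f\<in>{0..<N}. \<Sum>l<N. \<sigma> l * \<sigma> ((l + f) mod N))"

definition D_stab :: "nat \<Rightarrow> (nat \<Rightarrow> int) \<Rightarrow> nat" where
  "D_stab N \<sigma> = card {\<tau> \<in> GF N. autocorr N \<tau> = autocorr N \<sigma>}"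

definition Phi :: "nat \<Rightarrow> int \<Rightarrow> nat \<Rightarrow> int \<Rightarrow> (nat \<Rightarrow> int) \<Rightarrow> (nat \<Rightarrow> int)" where
  "Phi N s t r \<sigma> = (\<lambda>f\<in>{0..<N}. s * \<sigma> (nat ((r * int f + int t) mod int N)))"

definition sym_orbit :: "nat \<Rightarrow> (nat \<Rightarrow> int) \<Rightarrow> (nat \<Rightarrow> int) set" where
  "sym_orbit N \<sigma> = {Phi N s t r \<sigma> | s t r. s \<in> {-1, 1} \<and> t < N \<and> r \<in> {-1, 1}}"

definition D_sym :: "nat \<Rightarrow> (nat \<Rightarrow> int) \<Rightarrow> nat" where
  "D_sym N \<sigma> = card (sym_orbit N \<sigma>)"

definition num_blocks :: "nat \<Rightarrow> (nat \<Rightarrow> int) \<Rightarrow> nat" where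
  "num_blocks N \<sigma> = card {f \<in> {0..<N}. \<sigma> f \<noteq> \<sigma> ((f + 1) mod N)}"

end

theory Submission
  imports Defs "HOL-Computational_Algebra.Polynomial"
begin

text \<open>
  The symmetries preserve the autocorrelation, so it suffices to show that every \<open>\<tau>\<close> with the
  autocorrelation of \<open>\<sigma>\<close> lies in the orbit of \<open>\<sigma>\<close>. The autocorrelation at shift 1 is \<open>N\<close> minus twice
  the number of sign changes, which is even; so \<open>\<tau>\<close> and \<open>\<sigma>\<close> have the same number 0, 2 or 4 of
  blocks, and after a shift and a sign change each is the sequence of alternating blocks
  \<open>+\<dots>+ -\<dots>- (+\<dots>+ -\<dots>-)\<close> determined by its block lengths. Summing the autocorrelation over all shifts
  gives \<open>(\<Sum>\<sigma>)\<^sup>2\<close>, which determines two block lengths up to swapping them. For four blocks of lengths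
  \<open>g0, g1, g2, g3\<close>, the second differences of the autocorrelation are the correlations of the jump
  sequence \<open>\<sigma>\<^sub>l - \<sigma>\<^sub>l\<^sub>+\<^sub>1\<close>; these are the coefficients of a polynomial \<open>P\<close> with
  \<open>P + (1 + x\<^bsup>g0+g2\<^esup>)(1 + x\<^bsup>g1+g3\<^esup>) = \<Prod>i. (1 - x\<^bsup>gi\<^esup>)\<close>. Since \<open>(\<Sum>\<sigma>)\<^sup>2\<close> fixes the
  unordered pair \<open>{g0+g2, g1+g3}\<close>, the product and hence the multiset of block lengths is determined,
  and together with the pairing of opposite blocks this fixes the lengths up to rotation and
  reflection, which are symmetries.
\<close>

section \<open>Cyclic reading and autocorrelation\<close>

text \<open>\<open>\<sigma>\<close> as an \<open>N\<close>-periodic function on \<open>\<int>\<close>, so that the index arithmetic of \<open>F\<close> becomes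
  integer arithmetic.\<close>

definition cyclic :: "nat \<Rightarrow> (nat \<Rightarrow> int) \<Rightarrow> int \<Rightarrow> int" where
  "cyclic N \<sigma> x = \<sigma> (nat (x mod int N))"

lemma cyclic_mod [simp]: "cyclic N \<sigma> (x mod int N) = cyclic N \<sigma> x"
  by (simp add: cyclic_def)

lemma cyclic_mod_add [simp]: "cyclic N \<sigma> (x mod int N + c) = cyclic N \<sigma> (x + c)"
  by (metis cyclic_mod mod_add_left_eq)

lemma cyclic_add_mod [simp]: "cyclic N \<sigma> (c + x mod int N) = cyclic N \<sigma> (c + x)"
  by (metis cyclic_mod mod_add_right_eq)

lemma cyclic_mod_diff [simp]: "cyclic N \<sigma> (x mod int N - c) = cyclic N \<sigma> (x - c)"
  by (metis cyclic_mod mod_diff_left_eq)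

lemma cyclic_add_mod_diff [simp]: "cyclic N \<sigma> (c + x mod int N - d) = cyclic N \<sigma> (c + x - d)"
  by (metis cyclic_mod mod_add_right_eq mod_diff_left_eq)

lemma mod_eq_diff_self:
  fixes w :: int
  assumes "int N \<le> w" "w < 2 * int N"
  shows "w mod int N = w - int N"
proof -
  have "w mod int N = (w - int N) mod int N" by (simp add: minus_mod_self2)
  also have "\<dots> = w - int N" using assms by (intro mod_pos_pos_trivial) auto
  finally show ?thesis .
qed

lemma cyclic_wrap: "int N \<le> x \<Longrightarrow> x < 2 * int N \<Longrightarrow> cyclic N \<sigma> x = cyclic N \<sigma> (x - int N)"
  by (metis cyclic_mod mod_eq_diff_self)

lemma sum_lessThan_as_int: "(\<Sum>l<N. h l) = (\<Sum>l\<in>{0..<int N}. h (nat l))"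
proof -
  have "{0..<int N} = int ` {..<N}" by (simp add: image_int_atLeastLessThan lessThan_atLeast0)
  then show ?thesis by (simp add: sum.reindex)
qed

lemma sum_cyclic: "(\<Sum>l\<in>{0..<int N}. cyclic N \<sigma> l) = (\<Sum>j<N. \<sigma> j)"
  unfolding sum_lessThan_as_int cyclic_def by (intro sum.cong refl) auto

lemma sum_period_shift:
  fixes g :: "int \<Rightarrow> 'a::comm_monoid_add"
  assumes N: "0 < N" and per: "\<And>x. g (x mod int N) = g x"
  shows "(\<Sum>l\<in>{0..<int N}. g (l + c)) = (\<Sum>l\<in>{0..<int N}. g l)"
proof (rule sum.reindex_bij_witness[where i = "\<lambda>m. (m - c) mod int N" and j = "\<lambda>l. (l + c) mod int N"])
  fix a assume "a \<in> {0..<int N}"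
  then show "((a + c) mod int N - c) mod int N = a"
    by (simp add: mod_diff_left_eq)
next
  fix b assume "b \<in> {0..<int N}"
  then show "((b - c) mod int N + c) mod int N = b"
    by (simp add: mod_add_left_eq)
qed (use N per in auto)

lemma sum_period_reflect:
  fixes g :: "int \<Rightarrow> 'a::comm_monoid_add"
  assumes N: "0 < N" and per: "\<And>x. g (x mod int N) = g x"
  shows "(\<Sum>l\<in>{0..<int N}. g (- l)) = (\<Sum>l\<in>{0..<int N}. g l)"
proof (rule sum.reindex_bij_witness[where i = "\<lambda>m. (- m) mod int N" and j = "\<lambda>l. (- l) mod int N"])
  fix a assume "a \<in> {0..<int N}"
  then show "(- ((- a) mod int N)) mod int N = a"
    by (simp add: mod_minus_eq)
qed (use N per in \<open>auto simp: mod_minus_eq\<close>)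

definition acorr :: "nat \<Rightarrow> (nat \<Rightarrow> int) \<Rightarrow> int \<Rightarrow> int" where
  "acorr N \<sigma> f = (\<Sum>l\<in>{0..<int N}. cyclic N \<sigma> l * cyclic N \<sigma> (l + f))"

lemma acorr_mod: "acorr N \<sigma> (f mod int N) = acorr N \<sigma> f"
  unfolding acorr_def by (intro sum.cong refl) (metis cyclic_mod mod_add_right_eq)

lemma autocorr_eq_acorr: "f < N \<Longrightarrow> autocorr N \<sigma> f = acorr N \<sigma> (int f)"
  unfolding autocorr_def acorr_def cyclic_def sum_lessThan_as_int
  by (auto intro!: sum.cong simp: nat_mod_distrib nat_add_distrib)

lemma autocorr_eq_iff_acorr_eq:
  assumes N: "0 < N"
  shows "autocorr N \<tau> = autocorr N \<sigma> \<longleftrightarrow> acorr N \<tau> = acorr N \<sigma>"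
proof
  assume eq: "autocorr N \<tau> = autocorr N \<sigma>"
  show "acorr N \<tau> = acorr N \<sigma>"
  proof
    fix f
    have "nat (f mod int N) < N" using N by (simp add: nat_less_iff)
    then have "acorr N \<tau> (f mod int N) = acorr N \<sigma> (f mod int N)"
      using eq autocorr_eq_acorr N by (metis int_nat_eq pos_mod_sign of_nat_0_less_iff)
    then show "acorr N \<tau> f = acorr N \<sigma> f" by (simp add: acorr_mod)
  qed
next
  assume eq: "acorr N \<tau> = acorr N \<sigma>"
  show "autocorr N \<tau> = autocorr N \<sigma>"
  proof
    fix f
    show "autocorr N \<tau> f = autocorr N \<sigma> f"
    proof (cases "f < N")
      case True
      then show ?thesis by (simp add: autocorr_eq_acorr eq)
    qed (simp add: autocorr_def)
  qed
qed

lemma sum_acorr: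
  assumes N: "0 < N"
  shows "(\<Sum>f\<in>{0..<int N}. acorr N \<sigma> f) = (\<Sum>j<N. \<sigma> j)\<^sup>2"
proof -
  let ?x = "cyclic N \<sigma>"
  have "(\<Sum>f\<in>{0..<int N}. acorr N \<sigma> f) = (\<Sum>l\<in>{0..<int N}. ?x l * (\<Sum>f\<in>{0..<int N}. ?x (f + l)))"
    unfolding acorr_def by (subst sum.swap) (simp add: sum_distrib_left add.commute)
  also have "\<dots> = (\<Sum>l\<in>{0..<int N}. ?x l * (\<Sum>f\<in>{0..<int N}. ?x f))"
    by (intro sum.cong refl arg_cong2[where f = "(*)"] sum_period_shift[OF N]) simp
  finally show ?thesis by (simp only: sum_distrib_right[symmetric] sum_cyclic power2_eq_square)
qed

lemma sum_square_eq_if_acorr_eq: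
  assumes "0 < N" "acorr N \<tau> = acorr N \<sigma>"
  shows "(\<Sum>j<N. \<tau> j)\<^sup>2 = (\<Sum>j<N. \<sigma> j)\<^sup>2"
  using sum_acorr[OF assms(1), of \<tau>] sum_acorr[OF assms(1), of \<sigma>] assms(2) by simp

section \<open>The symmetry group\<close>

lemma Phi_restrict: "Phi N s t r \<sigma> = (\<lambda>f\<in>{0..<N}. s * cyclic N \<sigma> (r * int f + int t))"
  unfolding Phi_def cyclic_def by simp

lemma cyclic_Phi:
  assumes "0 < N"
  shows "cyclic N (Phi N s t r \<sigma>) x = s * cyclic N \<sigma> (r * x + int t)"
proof -
  have "nat (x mod int N) \<in> {0..<N}" using assms by (simp add: nat_less_iff)
  moreover have "(r * (x mod int N) + int t) mod int N = (r * x + int t) mod int N"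
    by (metis mod_add_left_eq mod_mult_right_eq)
  ultimately show ?thesis using assms by (simp add: cyclic_def Phi_def)
qed

lemma acorr_Phi:
  assumes N: "0 < N" and s: "s \<in> {-1,1}" and r: "r \<in> {-1,1}"
  shows "acorr N (Phi N s t r \<sigma>) f = acorr N \<sigma> f"
proof -
  let ?x = "cyclic N \<sigma>"
  have "acorr N (Phi N s t r \<sigma>) f = (\<Sum>l\<in>{0..<int N}. ?x (r * l + int t) * ?x (r * l + int t + r * f))"
    using s unfolding acorr_def cyclic_Phi[OF N]
    by (intro sum.cong refl) (auto simp: algebra_simps)
  also have "\<dots> = acorr N \<sigma> f"
  proof (cases "r = 1")
    case True
    then show ?thesis
      using sum_period_shift[OF N, where g = "\<lambda>l. ?x l * ?x (l + f)" and c = "int t"]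
      by (simp add: acorr_def add.assoc)
  next
    case False
    then have r: "r = -1" using r by auto
    define g where "g = (\<lambda>l. ?x (l + int t) * ?x (l + int t - f))"
    have per: "\<And>x. g (x mod int N) = g x" unfolding g_def
      by (metis cyclic_mod_add cyclic_mod_diff add_diff_eq)
    have "(\<Sum>l\<in>{0..<int N}. ?x (r * l + int t) * ?x (r * l + int t + r * f))
        = (\<Sum>l\<in>{0..<int N}. g (- l))"
      unfolding g_def r by (intro sum.cong refl) (simp add: algebra_simps)
    also have "\<dots> = (\<Sum>l\<in>{0..<int N}. g l)" using sum_period_reflect[OF N, of g, OF per] .
    also have "\<dots> = (\<Sum>l\<in>{0..<int N}. ?x l * ?x (l - f))"
      using sum_period_shift[OF N, where g = "\<lambda>l. ?x l * ?x (l - f)" and c = "int t"]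
      by (simp add: g_def algebra_simps)
    also have "\<dots> = (\<Sum>l\<in>{0..<int N}. ?x (l + f) * ?x l)"
      using sum_period_shift[OF N, where g = "\<lambda>l. ?x (l + f) * ?x l" and c = "- f"]
      by (simp add: algebra_simps)
    finally show ?thesis by (simp add: acorr_def mult.commute)
  qed
  finally show ?thesis .
qed

lemma GF_values: "\<sigma> \<in> GF N \<Longrightarrow> f < N \<Longrightarrow> \<sigma> f = -1 \<or> \<sigma> f = 1"
  unfolding GF_def by (auto simp: PiE_iff)

lemma cyclic_values: "0 < N \<Longrightarrow> \<sigma> \<in> GF N \<Longrightarrow> cyclic N \<sigma> x = -1 \<or> cyclic N \<sigma> x = 1"
  unfolding cyclic_def by (rule GF_values) (auto simp: nat_less_iff)

lemma Phi_in_GF: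
  assumes N: "0 < N" and s: "s \<in> {-1,1}" and \<sigma>: "\<sigma> \<in> GF N"
  shows "Phi N s t r \<sigma> \<in> GF N"
proof -
  have "s * cyclic N \<sigma> x \<in> {-1,1}" for x
    using cyclic_values[OF N \<sigma>, of x] s by auto
  then show ?thesis unfolding Phi_restrict GF_def by auto
qed

lemma Phi_Phi:
  assumes N: "0 < N"
  shows "Phi N s t r (Phi N s' t' r' \<sigma>) = Phi N (s * s') (nat ((r' * int t + int t') mod int N)) (r' * r) \<sigma>"
proof -
  have "int (nat ((r' * int t + int t') mod int N)) = (r' * int t + int t') mod int N"
    using N by simp
  then show ?thesis
    unfolding Phi_restrict[of N s] cyclic_Phi[OF N] Phi_restrict[of N "s * s'"]
    by (intro restrict_ext) (simp add: algebra_simps)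
qed

lemma Phi_ident: "\<sigma> \<in> GF N \<Longrightarrow> Phi N 1 0 1 \<sigma> = \<sigma>"
  unfolding Phi_restrict cyclic_def GF_def
  by (intro ext) (auto simp: PiE_iff extensional_def)

lemma sym_orbitI: "s \<in> {-1,1} \<Longrightarrow> t < N \<Longrightarrow> r \<in> {-1,1} \<Longrightarrow> Phi N s t r \<sigma> \<in> sym_orbit N \<sigma>"
  unfolding sym_orbit_def by blast

lemma sym_orbit_refl: "0 < N \<Longrightarrow> \<sigma> \<in> GF N \<Longrightarrow> \<sigma> \<in> sym_orbit N \<sigma>"
  using sym_orbitI[of 1 0 N 1 \<sigma>] Phi_ident by simp

lemma sym_orbit_trans:
  assumes N: "0 < N" and "\<rho> \<in> sym_orbit N \<tau>" and "\<tau> \<in> sym_orbit N \<sigma>"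
  shows "\<rho> \<in> sym_orbit N \<sigma>"
proof -
  obtain s t r where \<rho>: "\<rho> = Phi N s t r \<tau>" "s \<in> {-1,1}" "r \<in> {-1,1}"
    using assms(2) unfolding sym_orbit_def by blast
  obtain s' t' r' where \<tau>: "\<tau> = Phi N s' t' r' \<sigma>" "s' \<in> {-1,1}" "r' \<in> {-1,1}"
    using assms(3) unfolding sym_orbit_def by blast
  have "nat ((r' * int t + int t') mod int N) < N" using N by (simp add: nat_less_iff)
  moreover have "s * s' \<in> {-1,1}" "r' * r \<in> {-1,1}" using \<rho> \<tau> by auto
  ultimately show ?thesis using \<rho> \<tau> Phi_Phi[OF N] by (metis sym_orbitI)
qed

lemma sym_orbit_sym:
  assumes N: "0 < N" and \<sigma>: "\<sigma> \<in> GF N" and "\<tau> \<in> sym_orbit N \<sigma>"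
  shows "\<sigma> \<in> sym_orbit N \<tau>"
proof -
  obtain s t r where \<tau>: "\<tau> = Phi N s t r \<sigma>" "s \<in> {-1,1}" "r \<in> {-1,1}"
    using assms(3) unfolding sym_orbit_def by blast
  define t' where "t' = nat ((- r * int t) mod int N)"
  have t': "t' < N" "int t' = (- r * int t) mod int N"
    using N by (simp_all add: t'_def nat_less_iff)
  have "(r * int t' + int t) mod int N = (r * (- r * int t) + int t) mod int N"
    unfolding t'(2) by (metis mod_add_left_eq mod_mult_right_eq)
  also have "r * (- r * int t) + int t = 0" using \<tau> by auto
  finally have "Phi N s t' r \<tau> = \<sigma>"
    using \<tau> Phi_Phi[OF N] Phi_ident[OF \<sigma>] by auto
  then show ?thesis using sym_orbitI[OF \<tau>(2) t'(1) \<tau>(3)] by metis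
qed

lemma sym_orbit_subset_GF: "0 < N \<Longrightarrow> \<sigma> \<in> GF N \<Longrightarrow> sym_orbit N \<sigma> \<subseteq> GF N"
  unfolding sym_orbit_def using Phi_in_GF by blast

lemma acorr_sym_orbit: "0 < N \<Longrightarrow> \<rho> \<in> sym_orbit N \<tau> \<Longrightarrow> acorr N \<rho> = acorr N \<tau>"
  unfolding sym_orbit_def using acorr_Phi by fastforce

section \<open>Sign changes and block normal forms\<close>

definition sign_changes :: "nat \<Rightarrow> (nat \<Rightarrow> int) \<Rightarrow> nat set" where
  "sign_changes N \<sigma> = {f \<in> {0..<N}. \<sigma> f \<noteq> \<sigma> ((f + 1) mod N)}"

lemma num_blocks_eq_card: "num_blocks N \<sigma> = card (sign_changes N \<sigma>)"
  by (simp add: num_blocks_def sign_changes_def)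

lemma GF_mult: "\<sigma> \<in> GF N \<Longrightarrow> f < N \<Longrightarrow> g < N \<Longrightarrow> \<sigma> f * \<sigma> g = (if \<sigma> f = \<sigma> g then 1 else -1)"
  using GF_values[of \<sigma> N f] GF_values[of \<sigma> N g] by auto

lemma acorr_one:
  assumes N: "0 < N" and \<sigma>: "\<sigma> \<in> GF N"
  shows "acorr N \<sigma> 1 = int N - 2 * int (card (sign_changes N \<sigma>))"
proof -
  have "acorr N \<sigma> 1 = (\<Sum>l<N. \<sigma> l * \<sigma> ((l + 1) mod N))"
    unfolding acorr_def sum_lessThan_as_int cyclic_def
    by (auto intro!: sum.cong simp: nat_mod_distrib nat_add_distrib)
  also have "\<dots> = (\<Sum>l<N. 1 - 2 * of_bool (l \<in> sign_changes N \<sigma>))"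
    using N by (intro sum.cong refl) (auto simp: GF_mult[OF \<sigma>] sign_changes_def)
  also have "\<dots> = int N - 2 * int (card ({..<N} \<inter> sign_changes N \<sigma>))"
    by (simp add: sum_subtractf sum_distrib_left[symmetric] Int_def)
  also have "{..<N} \<inter> sign_changes N \<sigma> = sign_changes N \<sigma>"
    by (auto simp: sign_changes_def)
  finally show ?thesis .
qed

text \<open>The product of all \<open>\<sigma> l * \<sigma> (l + 1)\<close> is both \<open>(\<Prod>l. \<sigma> l)\<^sup>2 = 1\<close> and \<open>-1\<close> to the number of
  sign changes.\<close>

lemma even_card_sign_changes:
  assumes N: "0 < N" and \<sigma>: "\<sigma> \<in> GF N"
  shows "even (card (sign_changes N \<sigma>))"
proof -
  have shift: "(\<Prod>l<N. \<sigma> ((l + 1) mod N)) = (\<Prod>l<N. \<sigma> l)"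
  proof (rule prod.reindex_bij_witness[where i = "\<lambda>m. (m + N - 1) mod N" and j = "\<lambda>l. (l + 1) mod N"])
    fix a assume "a \<in> {..<N}"
    then show "((a + 1) mod N + N - 1) mod N = a"
      by (cases "a + 1 = N") auto
  next
    fix b assume "b \<in> {..<N}"
    then show "((b + N - 1) mod N + 1) mod N = b"
      by (cases "b = 0") (auto simp: mod_if)
  qed (use N in auto)
  have "(\<Prod>l<N. \<sigma> l) * (\<Prod>l<N. \<sigma> l) = (\<Prod>l<N. \<sigma> l * \<sigma> l)"
    by (simp add: prod.distrib)
  also have "\<dots> = 1" using GF_values[OF \<sigma>] by (intro prod.neutral) fastforce
  finally have "(\<Prod>l<N. \<sigma> l * \<sigma> ((l + 1) mod N)) = 1"
    by (simp only: prod.distrib shift)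
  moreover have "(\<Prod>l<N. \<sigma> l * \<sigma> ((l + 1) mod N)) = (\<Prod>l<N. (-1::int) ^ of_bool (l \<in> sign_changes N \<sigma>))"
    using N by (intro prod.cong refl) (auto simp: GF_mult[OF \<sigma>] sign_changes_def)
  moreover have "\<dots> = (-1) ^ card ({..<N} \<inter> sign_changes N \<sigma>)"
    by (simp add: power_sum[symmetric] Int_def)
  moreover have "{..<N} \<inter> sign_changes N \<sigma> = sign_changes N \<sigma>"
    by (auto simp: sign_changes_def)
  ultimately have "(-1::int) ^ card (sign_changes N \<sigma>) = 1" by simp
  then show ?thesis by (simp add: minus_one_power_iff split: if_splits)
qed

lemma cyclic_succ_ne_iff:
  assumes N: "0 < N"
  shows "cyclic N \<sigma> (x + 1) \<noteq> cyclic N \<sigma> x \<longleftrightarrow> nat (x mod int N) \<in> sign_changes N \<sigma>"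
proof -
  have "(x + 1) mod int N = (x mod int N + 1) mod int N" by (simp add: mod_add_left_eq)
  then have "nat ((x + 1) mod int N) = (nat (x mod int N) + 1) mod N"
    using N by (simp add: nat_mod_distrib nat_add_distrib)
  then show ?thesis using N by (auto simp: cyclic_def sign_changes_def nat_less_iff)
qed

lemma cyclic_flip:
  assumes "0 < N" "\<sigma> \<in> GF N" "nat (x mod int N) \<in> sign_changes N \<sigma>"
  shows "cyclic N \<sigma> (x + 1) = - cyclic N \<sigma> x"
  using cyclic_succ_ne_iff[of N \<sigma> x] cyclic_values[of N \<sigma> x] cyclic_values[of N \<sigma> "x + 1"] assms
  by auto

lemma cyclic_const_on_run:
  assumes N: "0 < N" and "a \<le> z" "z \<le> y"
    and no_change: "\<And>w. a \<le> w \<Longrightarrow> w < y \<Longrightarrow> nat (w mod int N) \<notin> sign_changes N \<sigma>"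
  shows "cyclic N \<sigma> z = cyclic N \<sigma> a"
  using assms(2,3)
proof (induction z rule: int_ge_induct)
  case (step i)
  then show ?case using cyclic_succ_ne_iff[OF N, of \<sigma> i] no_change[of i] by auto
qed simp

lemma card_eq_2_sorted:
  assumes "finite B" "card B = 2"
  obtains b0 b1 :: nat where "b0 < b1" "B = {b0, b1}"
proof -
  obtain l where l: "sorted_wrt (<) l" "set l = B" "length l = 2"
    using finite_set_strict_sorted[OF assms(1)] assms(2) by metis
  then have "l = [l!0, l!1]"
    by (intro nth_equalityI) (auto simp: less_Suc_eq numeral_eq_Suc)
  then obtain a b where "l = [a, b]" by blast
  then show ?thesis using l that by auto
qed

lemma card_eq_4_sorted:
  assumes "finite B" "card B = 4"
  obtains b0 b1 b2 b3 :: nat where "b0 < b1" "b1 < b2" "b2 < b3" "B = {b0, b1, b2, b3}"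
proof -
  obtain l where l: "sorted_wrt (<) l" "set l = B" "length l = 4"
    using finite_set_strict_sorted[OF assms(1)] assms(2) by metis
  then have "l = [l!0, l!1, l!2, l!3]"
    by (intro nth_equalityI) (auto simp: less_Suc_eq numeral_eq_Suc)
  then obtain a b c d where "l = [a, b, c, d]" by blast
  then show ?thesis using l that by auto
qed

lemma nat_mod_two_periods:
  "0 \<le> w \<Longrightarrow> w < 2 * int N \<Longrightarrow> nat (w mod int N) = (if w < int N then nat w else nat (w - int N))"
  using mod_eq_diff_self[of N w] by (simp add: mod_pos_pos_trivial)

lemma Phi_shift_apply: "j < N \<Longrightarrow> Phi N s t 1 \<tau> j = s * cyclic N \<tau> (int j + int t)"
  by (simp add: Phi_restrict)

definition const_seq :: "nat \<Rightarrow> nat \<Rightarrow> int" where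
  "const_seq N = (\<lambda>j\<in>{0..<N}. 1)"

definition two_block_seq :: "nat \<Rightarrow> nat \<Rightarrow> nat \<Rightarrow> int" where
  "two_block_seq N a = (\<lambda>j\<in>{0..<N}. if j < a then 1 else -1)"

text \<open>Blocks of lengths \<open>g0, g1, g2, g3\<close>, starting with \<open>+1\<close> at index 0; \<open>g3\<close> does not occur in the
  body and is meant to be \<open>N - g0 - g1 - g2\<close>.\<close>

definition four_block_seq :: "nat \<Rightarrow> nat \<Rightarrow> nat \<Rightarrow> nat \<Rightarrow> nat \<Rightarrow> nat \<Rightarrow> int" where
  "four_block_seq N g0 g1 g2 g3 = (\<lambda>j\<in>{0..<N}. if j < g0 then 1 else if j < g0 + g1 then -1
      else if j < g0 + g1 + g2 then 1 else -1)"

lemma const_seq_in_sym_orbit: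
  assumes N: "0 < N" and \<tau>: "\<tau> \<in> GF N" and "card (sign_changes N \<tau>) = 0"
  shows "const_seq N \<in> sym_orbit N \<tau>"
proof -
  have "finite (sign_changes N \<tau>)" by (simp add: sign_changes_def)
  then have no_change: "sign_changes N \<tau> = {}" using assms(3) by simp
  define s where "s = cyclic N \<tau> 0"
  have s: "s = -1 \<or> s = 1" using cyclic_values[OF N \<tau>] s_def by blast
  have "cyclic N \<tau> z = s" if "0 \<le> z" for z
    using cyclic_const_on_run[OF N that order.refl, of \<tau>] no_change unfolding s_def by simp
  then have "const_seq N = Phi N s 0 1 \<tau>"
    unfolding Phi_restrict const_seq_def using s by (intro restrict_ext) auto
  then show ?thesis using sym_orbitI[of s 0 N 1 \<tau>] s N by auto
qed

lemma two_block_seq_in_sym_orbit: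
  assumes N: "0 < N" and \<tau>: "\<tau> \<in> GF N" and "card (sign_changes N \<tau>) = 2"
  obtains a where "0 < a" "a < N" "two_block_seq N a \<in> sym_orbit N \<tau>"
proof -
  have "finite (sign_changes N \<tau>)" by (simp add: sign_changes_def)
  then obtain b0 b1 where b: "b0 < b1" and B: "sign_changes N \<tau> = {b0, b1}"
    using card_eq_2_sorted assms(3) by blast
  have b1: "b1 < N" using B by (auto simp: sign_changes_def)
  define s where "s = cyclic N \<tau> (int b0 + 1)"
  have s: "s = -1 \<or> s = 1" using cyclic_values[OF N \<tau>] s_def by blast
  have run0: "cyclic N \<tau> z = s" if "int b0 + 1 \<le> z" "z \<le> int b1" for z
    unfolding s_def
    by (rule cyclic_const_on_run[OF N that]) (use b b1 in \<open>auto simp: B nat_mod_two_periods split: if_splits\<close>)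
  have flip1: "cyclic N \<tau> (int b1 + 1) = - s"
    using cyclic_flip[OF N \<tau>, of "int b1"] run0[of "int b1"] b b1 B by auto
  have run1: "cyclic N \<tau> z = - s" if "int b1 + 1 \<le> z" "z \<le> int b0 + int N" for z
    unfolding flip1[symmetric]
    by (rule cyclic_const_on_run[OF N that]) (use b b1 in \<open>auto simp: B nat_mod_two_periods split: if_splits\<close>)
  define a where "a = b1 - b0"
  have "two_block_seq N a = Phi N s (b0 + 1) 1 \<tau>"
  proof
    fix j
    show "two_block_seq N a j = Phi N s (b0 + 1) 1 \<tau> j"
    proof (cases "j < N")
      case True
      then have "Phi N s (b0 + 1) 1 \<tau> j = s * cyclic N \<tau> (int j + int b0 + 1)"
        by (simp add: Phi_shift_apply algebra_simps)
      then show ?thesis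
        using run0[of "int j + int b0 + 1"] run1[of "int j + int b0 + 1"] True s b b1
        by (auto simp: two_block_seq_def a_def)
    qed (simp add: two_block_seq_def Phi_def)
  qed
  moreover have "0 < a" "a < N" using b b1 by (auto simp: a_def)
  ultimately show ?thesis using that sym_orbitI[of s "b0 + 1" N 1 \<tau>] s b b1 by auto
qed

lemma four_block_seq_in_sym_orbit:
  assumes N: "0 < N" and \<tau>: "\<tau> \<in> GF N" and "card (sign_changes N \<tau>) = 4"
  obtains g0 g1 g2 g3 where "0 < g0" "0 < g1" "0 < g2" "0 < g3" "g0 + g1 + g2 + g3 = N"
    "four_block_seq N g0 g1 g2 g3 \<in> sym_orbit N \<tau>"
proof -
  have "finite (sign_changes N \<tau>)" by (simp add: sign_changes_def)
  then obtain b0 b1 b2 b3 where b: "b0 < b1" "b1 < b2" "b2 < b3"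
    and B: "sign_changes N \<tau> = {b0, b1, b2, b3}"
    using card_eq_4_sorted assms(3) by blast
  have b3: "b3 < N" using B by (auto simp: sign_changes_def)
  define s where "s = cyclic N \<tau> (int b0 + 1)"
  have s: "s = -1 \<or> s = 1" using cyclic_values[OF N \<tau>] s_def by blast
  have run0: "cyclic N \<tau> z = s" if "int b0 + 1 \<le> z" "z \<le> int b1" for z
    unfolding s_def
    by (rule cyclic_const_on_run[OF N that]) (use b b3 in \<open>auto simp: B nat_mod_two_periods split: if_splits\<close>)
  have flip1: "cyclic N \<tau> (int b1 + 1) = - s"
    using cyclic_flip[OF N \<tau>, of "int b1"] run0[of "int b1"] b b3 B by auto
  have run1: "cyclic N \<tau> z = - s" if "int b1 + 1 \<le> z" "z \<le> int b2" for z
    unfolding flip1[symmetric]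
    by (rule cyclic_const_on_run[OF N that]) (use b b3 in \<open>auto simp: B nat_mod_two_periods split: if_splits\<close>)
  have flip2: "cyclic N \<tau> (int b2 + 1) = s"
    using cyclic_flip[OF N \<tau>, of "int b2"] run1[of "int b2"] b b3 B by auto
  have run2: "cyclic N \<tau> z = s" if "int b2 + 1 \<le> z" "z \<le> int b3" for z
    unfolding flip2[symmetric]
    by (rule cyclic_const_on_run[OF N that]) (use b b3 in \<open>auto simp: B nat_mod_two_periods split: if_splits\<close>)
  have flip3: "cyclic N \<tau> (int b3 + 1) = - s"
    using cyclic_flip[OF N \<tau>, of "int b3"] run2[of "int b3"] b b3 B by auto
  have run3: "cyclic N \<tau> z = - s" if "int b3 + 1 \<le> z" "z \<le> int b0 + int N" for z
    unfolding flip3[symmetric]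
    by (rule cyclic_const_on_run[OF N that]) (use b b3 in \<open>auto simp: B nat_mod_two_periods split: if_splits\<close>)
  define g0 g1 g2 g3 where "g0 = b1 - b0" "g1 = b2 - b1" "g2 = b3 - b2" "g3 = N + b0 - b3"
  have "four_block_seq N g0 g1 g2 g3 = Phi N s (b0 + 1) 1 \<tau>"
  proof
    fix j
    show "four_block_seq N g0 g1 g2 g3 j = Phi N s (b0 + 1) 1 \<tau> j"
    proof (cases "j < N")
      case True
      then have "Phi N s (b0 + 1) 1 \<tau> j = s * cyclic N \<tau> (int j + int b0 + 1)"
        by (simp add: Phi_shift_apply algebra_simps)
      then show ?thesis
        using run0[of "int j + int b0 + 1"] run1[of "int j + int b0 + 1"]
          run2[of "int j + int b0 + 1"] run3[of "int j + int b0 + 1"] True s b b3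
        by (auto simp: four_block_seq_def g0_g1_g2_g3_def)
    qed (simp add: four_block_seq_def Phi_def)
  qed
  moreover have "0 < g0" "0 < g1" "0 < g2" "0 < g3" "g0 + g1 + g2 + g3 = N"
    using b b3 by (auto simp: g0_g1_g2_g3_def)
  ultimately show ?thesis using that sym_orbitI[of s "b0 + 1" N 1 \<tau>] s b b3 by auto
qed

section \<open>Two blocks\<close>

lemma sum_two_block_seq:
  assumes "a \<le> N"
  shows "(\<Sum>j<N. two_block_seq N a j) = int a - int (N - a)"
proof -
  have "(\<Sum>j<N. two_block_seq N a j) = (\<Sum>j\<in>{0..<a}. 1) + (\<Sum>j\<in>{a..<N}. -1)"
    using assms unfolding lessThan_atLeast0 sum.atLeastLessThan_concat[OF le0 assms, symmetric]
    by (intro arg_cong2[where f = "(+)"] sum.cong refl) (auto simp: two_block_seq_def)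
  then show ?thesis using assms by simp
qed

lemma cyclic_two_block_seq:
  "0 \<le> x \<Longrightarrow> x < int N \<Longrightarrow> cyclic N (two_block_seq N a) x = (if x < int a then 1 else -1)"
  by (auto simp: cyclic_def two_block_seq_def nat_less_iff)

lemma two_block_seq_complement:
  assumes a: "a < N"
  shows "two_block_seq N (N - a) \<in> sym_orbit N (two_block_seq N a)"
proof -
  let ?P = "two_block_seq N a"
  have "two_block_seq N (N - a) = Phi N (-1) a 1 ?P"
    unfolding Phi_restrict
  proof (subst two_block_seq_def, rule restrict_ext)
    fix j assume j: "j \<in> {0..<N}"
    show "(if j < N - a then 1 else -1) = - 1 * cyclic N ?P (1 * int j + int a)"
    proof (cases "int j + int a < int N")
      case True
      then show ?thesis using cyclic_two_block_seq[of "int j + int a" N a] j by auto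
    next
      case False
      then show ?thesis
        using cyclic_wrap[of N "int j + int a"] cyclic_two_block_seq[of "int j + int a - int N" N a] a j
        by auto
    qed
  qed
  then show ?thesis using a by (auto intro: sym_orbitI)
qed

lemma two_block_case:
  assumes N: "0 < N" and \<tau>: "\<tau> \<in> GF N" and \<sigma>: "\<sigma> \<in> GF N"
    and "card (sign_changes N \<tau>) = 2" "card (sign_changes N \<sigma>) = 2"
    and eq: "acorr N \<tau> = acorr N \<sigma>"
  shows "\<tau> \<in> sym_orbit N \<sigma>"
proof -
  obtain a where a: "0 < a" "a < N" and \<tau>a: "two_block_seq N a \<in> sym_orbit N \<tau>"
    using two_block_seq_in_sym_orbit[OF N \<tau> assms(4)] by blast
  obtain c where c: "0 < c" "c < N" and \<sigma>c: "two_block_seq N c \<in> sym_orbit N \<sigma>"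
    using two_block_seq_in_sym_orbit[OF N \<sigma> assms(5)] by blast
  have "acorr N (two_block_seq N a) = acorr N (two_block_seq N c)"
    using acorr_sym_orbit[OF N \<tau>a] acorr_sym_orbit[OF N \<sigma>c] eq by simp
  then have "(int a - int (N - a))\<^sup>2 = (int c - int (N - c))\<^sup>2"
    using sum_square_eq_if_acorr_eq[OF N] sum_two_block_seq a c by (metis less_imp_le)
  then have "a = c \<or> a = N - c"
    using a c by (auto simp: power2_eq_iff)
  moreover have "two_block_seq N c \<in> GF N"
    unfolding GF_def two_block_seq_def by auto
  ultimately have "two_block_seq N a \<in> sym_orbit N (two_block_seq N c)"
    using sym_orbit_refl[OF N] two_block_seq_complement[OF c(2)] by auto
  then show ?thesis
    using sym_orbit_trans[OF N sym_orbit_sym[OF N \<tau> \<tau>a]] sym_orbit_trans[OF N _ \<sigma>c] by blast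
qed

section \<open>Four blocks\<close>

definition diff_corr :: "nat \<Rightarrow> (nat \<Rightarrow> int) \<Rightarrow> int \<Rightarrow> int" where
  "diff_corr N \<sigma> f = (\<Sum>l\<in>{0..<int N}. (cyclic N \<sigma> l - cyclic N \<sigma> (l + 1)) *
                                       (cyclic N \<sigma> (l + f) - cyclic N \<sigma> (l + f + 1)))"

lemma diff_corr_acorr:
  assumes N: "0 < N"
  shows "diff_corr N \<sigma> f = 2 * acorr N \<sigma> f - acorr N \<sigma> (f + 1) - acorr N \<sigma> (f - 1)"
proof -
  let ?x = "cyclic N \<sigma>"
  have "(\<Sum>l\<in>{0..<int N}. ?x (l + 1) * ?x (l + f + 1)) = acorr N \<sigma> f"
    using sum_period_shift[OF N, where g = "\<lambda>l. ?x l * ?x (l + f)" and c = 1]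
    unfolding acorr_def by (simp add: algebra_simps)
  moreover have "(\<Sum>l\<in>{0..<int N}. ?x (l + 1) * ?x (l + f)) = acorr N \<sigma> (f - 1)"
    using sum_period_shift[OF N, where g = "\<lambda>l. ?x l * ?x (l + (f - 1))" and c = 1]
    unfolding acorr_def by (simp add: algebra_simps)
  moreover have "(\<Sum>l\<in>{0..<int N}. ?x l * ?x (l + f + 1)) = acorr N \<sigma> (f + 1)"
    unfolding acorr_def by (simp add: algebra_simps)
  ultimately show ?thesis
    unfolding diff_corr_def by (simp add: acorr_def algebra_simps sum_subtractf sum.distrib)
qed

lemma sum_four_block_seq:
  assumes "g0 + g1 + g2 + g3 = N"
  shows "(\<Sum>j<N. four_block_seq N g0 g1 g2 g3 j) = int g0 - int g1 + int g2 - int g3"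
proof -
  let ?p = "four_block_seq N g0 g1 g2 g3"
  have "(\<Sum>j<N. ?p j) = (\<Sum>j\<in>{0..<g0}. ?p j) + (\<Sum>j\<in>{g0..<g0+g1}. ?p j)
      + (\<Sum>j\<in>{g0+g1..<g0+g1+g2}. ?p j) + (\<Sum>j\<in>{g0+g1+g2..<N}. ?p j)"
    using assms by (simp add: sum.atLeastLessThan_concat lessThan_atLeast0)
  also have "\<dots> = (\<Sum>j\<in>{0..<g0}. 1) + (\<Sum>j\<in>{g0..<g0+g1}. -1)
      + (\<Sum>j\<in>{g0+g1..<g0+g1+g2}. 1) + (\<Sum>j\<in>{g0+g1+g2..<N}. -1)"
    using assms by (intro arg_cong2[where f = "(+)"] sum.cong refl) (auto simp: four_block_seq_def)
  finally show ?thesis using assms by simp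
qed

lemma cyclic_four_block_seq:
  assumes "0 \<le> x" "x < int N"
  shows "cyclic N (four_block_seq N g0 g1 g2 g3) x = (if x < int g0 then 1 else if x < int g0 + int g1 then -1
      else if x < int g0 + int g1 + int g2 then 1 else -1)"
  using assms by (auto simp: cyclic_def four_block_seq_def nat_less_iff)

definition alt_hits :: "int \<Rightarrow> int \<Rightarrow> int \<Rightarrow> int \<Rightarrow> int \<Rightarrow> int \<Rightarrow> int" where
  "alt_hits n x b0 b1 b2 b3 =
     of_bool (x mod n = b0) - of_bool (x mod n = b1) + of_bool (x mod n = b2) - of_bool (x mod n = b3)"

lemma four_block_seq_diff:
  assumes g: "0 < g0" "0 < g1" "0 < g2" "0 < g3" "g0 + g1 + g2 + g3 = N"
  shows "cyclic N (four_block_seq N g0 g1 g2 g3) x - cyclic N (four_block_seq N g0 g1 g2 g3) (x + 1) =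
    2 * alt_hits (int N) x (int g0 - 1) (int g0 + int g1 - 1) (int g0 + int g1 + int g2 - 1) (int N - 1)"
proof -
  let ?P = "four_block_seq N g0 g1 g2 g3" and ?l = "x mod int N"
  have l: "0 \<le> ?l" "?l < int N" using g by auto
  have "cyclic N ?P x - cyclic N ?P (x + 1) = cyclic N ?P ?l - cyclic N ?P (?l + 1)" by simp
  also have "\<dots> = 2 * alt_hits (int N) ?l (int g0 - 1) (int g0 + int g1 - 1) (int g0 + int g1 + int g2 - 1) (int N - 1)"
  proof (cases "?l + 1 < int N")
    case True
    then show ?thesis
      using cyclic_four_block_seq[of ?l N] cyclic_four_block_seq[of "?l + 1" N] l g
      by (auto simp: alt_hits_def)
  next
    case False
    then have "?l + 1 = int N" using l by simp
    then have "cyclic N ?P (?l + 1) = cyclic N ?P 0" by (metis cyclic_mod mod_self)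
    then show ?thesis
      using cyclic_four_block_seq[of ?l N] cyclic_four_block_seq[of 0 N] \<open>?l + 1 = int N\<close> l g
      by (auto simp: alt_hits_def)
  qed
  finally show ?thesis by (simp add: alt_hits_def)
qed

lemma diff_corr_four_block_seq:
  assumes g: "0 < g0" "0 < g1" "0 < g2" "0 < g3" "g0 + g1 + g2 + g3 = N"
  defines "b0 \<equiv> int g0 - 1" and "b1 \<equiv> int g0 + int g1 - 1"
    and "b2 \<equiv> int g0 + int g1 + int g2 - 1" and "b3 \<equiv> int N - 1"
  shows "diff_corr N (four_block_seq N g0 g1 g2 g3) f =
    4 * (alt_hits (int N) (b0 + f) b0 b1 b2 b3 - alt_hits (int N) (b1 + f) b0 b1 b2 b3
       + alt_hits (int N) (b2 + f) b0 b1 b2 b3 - alt_hits (int N) (b3 + f) b0 b1 b2 b3)"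
proof -
  let ?h = "\<lambda>x. alt_hits (int N) x b0 b1 b2 b3"
  have b: "b0 \<in> {0..<int N}" "b1 \<in> {0..<int N}" "b2 \<in> {0..<int N}" "b3 \<in> {0..<int N}"
    using g by (auto simp: b0_def b1_def b2_def b3_def)
  have "diff_corr N (four_block_seq N g0 g1 g2 g3) f = (\<Sum>l\<in>{0..<int N}. 4 * (?h l * ?h (l + f)))"
    unfolding diff_corr_def four_block_seq_diff[OF g] b0_def b1_def b2_def b3_def
    by (simp add: add.assoc)
  also have "\<dots> = 4 * (\<Sum>l\<in>{0..<int N}.
      (of_bool (l = b0) - of_bool (l = b1) + of_bool (l = b2) - of_bool (l = b3)) * ?h (l + f))"
    by (simp add: sum_distrib_left alt_hits_def)
  also have "\<dots> = 4 * (?h (b0 + f) - ?h (b1 + f) + ?h (b2 + f) - ?h (b3 + f))"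
    using b by (simp add: algebra_simps sum.distrib sum_subtractf)
  finally show ?thesis .
qed

text \<open>Writing \<open>x\<^sup>k\<close> as \<open>monom 1 k\<close>, this is the generating polynomial of the correlations of the
  jump sequence of a four-block sequence, up to the factor 4 and the constant term.\<close>

definition gap_poly :: "nat \<Rightarrow> nat \<Rightarrow> nat \<Rightarrow> nat \<Rightarrow> int poly" where
  "gap_poly g0 g1 g2 g3 =
     monom 1 (g0 + g1) + monom 1 (g1 + g2) + monom 1 (g2 + g3) + monom 1 (g3 + g0)
     - monom 1 g0 - monom 1 g1 - monom 1 g2 - monom 1 g3
     - monom 1 (g1 + g2 + g3) - monom 1 (g0 + g2 + g3) - monom 1 (g0 + g1 + g3) - monom 1 (g0 + g1 + g2)"

lemma coeff_monom_1: "coeff (monom (1::int) m) n = of_bool (m = n)"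
  by (simp add: coeff_monom)

lemma mod_eq_iff_within_two_periods:
  assumes "0 \<le> x" "x < 2 * int N" "0 \<le> b" "b < int N"
  shows "x mod int N = b \<longleftrightarrow> x = b \<or> x = b + int N"
  using assms mod_eq_diff_self[of N x] by (cases "x < int N") auto

lemma diff_corr_four_block_seq_eq_coeff:
  assumes g: "0 < g0" "0 < g1" "0 < g2" "0 < g3" "g0 + g1 + g2 + g3 = N"
    and n: "0 < n" "n < N"
  shows "diff_corr N (four_block_seq N g0 g1 g2 g3) (int n) = 4 * coeff (gap_poly g0 g1 g2 g3) n"
proof -
  have hit: "(b + int n) mod int N = c \<longleftrightarrow> b + int n = c \<or> b + int n = c + int N"
    if "0 \<le> b" "b < int N" "0 \<le> c" "c < int N" for b c
    using mod_eq_iff_within_two_periods[of "b + int n" N c] that n by auto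
  have e: "(int g0 - 1 + int n) mod int N = int g0 - 1 \<longleftrightarrow> False"
    "(int g0 - 1 + int n) mod int N = int g0 + int g1 - 1 \<longleftrightarrow> g1 = n"
    "(int g0 - 1 + int n) mod int N = int g0 + int g1 + int g2 - 1 \<longleftrightarrow> g1 + g2 = n"
    "(int g0 - 1 + int n) mod int N = int N - 1 \<longleftrightarrow> g1 + g2 + g3 = n"
    "(int g0 + int g1 - 1 + int n) mod int N = int g0 - 1 \<longleftrightarrow> g0 + g2 + g3 = n"
    "(int g0 + int g1 - 1 + int n) mod int N = int g0 + int g1 - 1 \<longleftrightarrow> False"
    "(int g0 + int g1 - 1 + int n) mod int N = int g0 + int g1 + int g2 - 1 \<longleftrightarrow> g2 = n"
    "(int g0 + int g1 - 1 + int n) mod int N = int N - 1 \<longleftrightarrow> g2 + g3 = n"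
    "(int g0 + int g1 + int g2 - 1 + int n) mod int N = int g0 - 1 \<longleftrightarrow> g3 + g0 = n"
    "(int g0 + int g1 + int g2 - 1 + int n) mod int N = int g0 + int g1 - 1 \<longleftrightarrow> g3 + g0 + g1 = n"
    "(int g0 + int g1 + int g2 - 1 + int n) mod int N = int g0 + int g1 + int g2 - 1 \<longleftrightarrow> False"
    "(int g0 + int g1 + int g2 - 1 + int n) mod int N = int N - 1 \<longleftrightarrow> g3 = n"
    "(int N - 1 + int n) mod int N = int g0 - 1 \<longleftrightarrow> g0 = n"
    "(int N - 1 + int n) mod int N = int g0 + int g1 - 1 \<longleftrightarrow> g0 + g1 = n"
    "(int N - 1 + int n) mod int N = int g0 + int g1 + int g2 - 1 \<longleftrightarrow> g0 + g1 + g2 = n"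
    "(int N - 1 + int n) mod int N = int N - 1 \<longleftrightarrow> False"
    using g n by (subst hit; simp; linarith)+
  show ?thesis
    unfolding diff_corr_four_block_seq[OF g] alt_hits_def gap_poly_def
    by (simp only: e coeff_add coeff_diff coeff_monom_1 of_bool_eq) (simp add: algebra_simps)
qed

lemma coeff_gap_poly_outside:
  assumes g: "0 < g0" "0 < g1" "0 < g2" "0 < g3" "g0 + g1 + g2 + g3 = N"
    and n: "n = 0 \<or> N \<le> n"
  shows "coeff (gap_poly g0 g1 g2 g3) n = 0"
proof -
  have "g0 + g1 \<noteq> n" "g1 + g2 \<noteq> n" "g2 + g3 \<noteq> n" "g3 + g0 \<noteq> n"
    "g0 \<noteq> n" "g1 \<noteq> n" "g2 \<noteq> n" "g3 \<noteq> n"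
    "g1 + g2 + g3 \<noteq> n" "g0 + g2 + g3 \<noteq> n" "g0 + g1 + g3 \<noteq> n" "g0 + g1 + g2 \<noteq> n"
    using g n by linarith+
  then show ?thesis
    unfolding gap_poly_def by (simp only: coeff_add coeff_diff coeff_monom_1 of_bool_eq) simp
qed

lemma gap_poly_eq_if_diff_corr_eq:
  assumes g: "0 < g0" "0 < g1" "0 < g2" "0 < g3" "g0 + g1 + g2 + g3 = N"
    and h: "0 < h0" "0 < h1" "0 < h2" "0 < h3" "h0 + h1 + h2 + h3 = N"
    and eq: "diff_corr N (four_block_seq N g0 g1 g2 g3) = diff_corr N (four_block_seq N h0 h1 h2 h3)"
  shows "gap_poly g0 g1 g2 g3 = gap_poly h0 h1 h2 h3"
proof (rule poly_eqI)
  fix n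
  show "coeff (gap_poly g0 g1 g2 g3) n = coeff (gap_poly h0 h1 h2 h3) n"
  proof (cases "0 < n \<and> n < N")
    case True
    then show ?thesis
      using diff_corr_four_block_seq_eq_coeff[OF g, of n] diff_corr_four_block_seq_eq_coeff[OF h, of n] eq
      by simp
  next
    case False
    then show ?thesis using coeff_gap_poly_outside[OF g] coeff_gap_poly_outside[OF h] by auto
  qed
qed

definition gap_prod :: "nat multiset \<Rightarrow> int poly" where
  "gap_prod M = (\<Prod>g\<in>#M. 1 - monom 1 g)"

lemma gap_prod_add_mset: "gap_prod (add_mset g M) = (1 - monom 1 g) * gap_prod M"
  by (simp add: gap_prod_def)

lemma gap_poly_add:
  "gap_poly g0 g1 g2 g3 + (1 + monom 1 (g0 + g2)) * (1 + monom 1 (g1 + g3)) = gap_prod {#g0, g1, g2, g3#}"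
proof -
  have ring: "x0*x1 + x1*x2 + x2*x3 + x3*x0 - x0 - x1 - x2 - x3 - x1*x2*x3 - x0*x2*x3 - x0*x1*x3 - x0*x1*x2
      + (1 + x0*x2) * (1 + x1*x3) = (1 - x0) * (1 - x1) * (1 - x2) * (1 - x3)"
    for x0 x1 x2 x3 :: "int poly"
    by (simp add: algebra_simps)
  have monom_add: "monom (1::int) (a + b) = monom 1 a * monom 1 b" for a b
    by (simp add: mult_monom)
  have "gap_poly g0 g1 g2 g3 + (1 + monom 1 (g0 + g2)) * (1 + monom 1 (g1 + g3))
      = (1 - monom 1 g0) * (1 - monom 1 g1) * (1 - monom 1 g2) * (1 - monom 1 g3)"
    unfolding gap_poly_def monom_add by (rule ring)
  also have "\<dots> = gap_prod {#g0, g1, g2, g3#}"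
    by (simp add: gap_prod_def algebra_simps)
  finally show ?thesis .
qed

lemma coeff_gap_prod_0: "\<forall>g\<in>#M. 0 < g \<Longrightarrow> coeff (gap_prod M) 0 = 1"
proof (induction M)
  case (add g M)
  then show ?case by (simp add: gap_prod_add_mset left_diff_distrib coeff_monom_mult)
qed (simp add: gap_prod_def)

lemma coeff_gap_prod_low:
  assumes "0 < m" "\<forall>g\<in>#M. m \<le> g"
  shows "(\<forall>k. 0 < k \<longrightarrow> k < m \<longrightarrow> coeff (gap_prod M) k = 0) \<and> coeff (gap_prod M) m = - int (count M m)"
  using assms(2)
proof (induction M)
  case (add g M)
  then have IH: "\<forall>k. 0 < k \<longrightarrow> k < m \<longrightarrow> coeff (gap_prod M) k = 0" "coeff (gap_prod M) m = - int (count M m)"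
    and "m \<le> g" by auto
  moreover have "coeff (gap_prod M) 0 = 1" using add.prems assms(1) coeff_gap_prod_0[of M] by fastforce
  ultimately show ?case
    by (simp add: gap_prod_add_mset left_diff_distrib coeff_monom_mult)
qed (use assms(1) in \<open>simp add: gap_prod_def\<close>)

lemma gap_prod_inj:
  "\<forall>g\<in>#M. 0 < g \<Longrightarrow> \<forall>g\<in>#M'. 0 < g \<Longrightarrow> gap_prod M = gap_prod M' \<Longrightarrow> M = M'"
proof (induction "size M + size M'" arbitrary: M M' rule: less_induct)
  case less
  show ?case
  proof (cases "M = {#} \<and> M' = {#}")
    case False
    define S where "S = set_mset M \<union> set_mset M'"
    have S: "finite S" "S \<noteq> {}" using False by (auto simp: S_def)
    define m where "m = Min S"
    have m: "m \<in> S" "\<forall>g\<in>#M. m \<le> g" "\<forall>g\<in>#M'. m \<le> g"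
      using Min_in[OF S] S(1) by (auto simp: m_def S_def)
    have "0 < m" using m(1) less.prems by (auto simp: S_def)
    then have "count M m = count M' m"
      using coeff_gap_prod_low[of m M] coeff_gap_prod_low[of m M'] m less.prems(3) by simp
    moreover have "0 < count M m \<or> 0 < count M' m" using m(1) by (auto simp: S_def)
    ultimately have "0 < count M m" "0 < count M' m" by linarith+
    then have "m \<in># M" "m \<in># M'" by simp_all
    then obtain M1 M1' where M1: "M = add_mset m M1" and M1': "M' = add_mset m M1'"
      by (metis multi_member_split)
    have "coeff (1 - monom (1::int) m) 0 = 1" using \<open>0 < m\<close> by (simp add: coeff_monom)
    then have "1 - monom (1::int) m \<noteq> 0" by (metis coeff_0 zero_neq_one)
    then have "gap_prod M1 = gap_prod M1'"
      using less.prems(3) by (simp add: M1 M1' gap_prod_add_mset)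
    then show ?thesis using less.hyps less.prems by (auto simp: M1 M1')
  qed simp
qed

lemma four_block_seq_rotate:
  assumes g: "0 < g0" "0 < g1" "0 < g2" "0 < g3" "g0 + g1 + g2 + g3 = N"
  shows "four_block_seq N g1 g2 g3 g0 \<in> sym_orbit N (four_block_seq N g0 g1 g2 g3)"
proof -
  let ?P = "four_block_seq N g0 g1 g2 g3"
  have "four_block_seq N g1 g2 g3 g0 = Phi N (-1) g0 1 ?P"
    unfolding Phi_restrict
  proof (subst four_block_seq_def, rule restrict_ext)
    fix j assume j: "j \<in> {0..<N}"
    show "(if j < g1 then 1 else if j < g1 + g2 then -1 else if j < g1 + g2 + g3 then 1 else -1) =
       - 1 * cyclic N ?P (1 * int j + int g0)"
    proof (cases "int j + int g0 < int N")
      case True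
      then show ?thesis using cyclic_four_block_seq[of "int j + int g0" N g0 g1 g2 g3] g j by auto
    next
      case False
      then show ?thesis
        using cyclic_wrap[of N "int j + int g0"] cyclic_four_block_seq[of "int j + int g0 - int N" N g0 g1 g2 g3] g j
        by auto
    qed
  qed
  then show ?thesis using g by (auto intro: sym_orbitI)
qed

lemma four_block_seq_reflect:
  assumes g: "0 < g0" "0 < g1" "0 < g2" "0 < g3" "g0 + g1 + g2 + g3 = N"
  shows "four_block_seq N g3 g2 g1 g0 \<in> sym_orbit N (four_block_seq N g0 g1 g2 g3)"
proof -
  let ?P = "four_block_seq N g0 g1 g2 g3"
  have "four_block_seq N g3 g2 g1 g0 = Phi N (-1) (N - 1) (-1) ?P"
    unfolding Phi_restrict
  proof (subst four_block_seq_def, rule restrict_ext)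
    fix j assume j: "j \<in> {0..<N}"
    have "int (N - 1) = int N - 1" using g by simp
    then show "(if j < g3 then 1 else if j < g3 + g2 then -1 else if j < g3 + g2 + g1 then 1 else -1) =
       - 1 * cyclic N ?P (- 1 * int j + int (N - 1))"
      using cyclic_four_block_seq[of "int N - 1 - int j" N g0 g1 g2 g3] g j by auto
  qed
  then show ?thesis using g by (auto intro: sym_orbitI)
qed

definition dihedral_gaps :: "nat \<Rightarrow> nat \<Rightarrow> nat \<Rightarrow> nat \<Rightarrow> (nat \<times> nat \<times> nat \<times> nat) set" where
  "dihedral_gaps h0 h1 h2 h3 = {(h0, h1, h2, h3), (h1, h2, h3, h0), (h2, h3, h0, h1), (h3, h0, h1, h2),
     (h3, h2, h1, h0), (h0, h3, h2, h1), (h1, h0, h3, h2), (h2, h1, h0, h3)}"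

lemma four_block_seq_dihedral:
  assumes N: "0 < N" and h: "0 < h0" "0 < h1" "0 < h2" "0 < h3" "h0 + h1 + h2 + h3 = N"
    and "(g0, g1, g2, g3) \<in> dihedral_gaps h0 h1 h2 h3"
  shows "four_block_seq N g0 g1 g2 g3 \<in> sym_orbit N (four_block_seq N h0 h1 h2 h3)"
proof -
  let ?Q = "four_block_seq N h0 h1 h2 h3"
  have "?Q \<in> GF N" unfolding GF_def four_block_seq_def by auto
  then have r0: "?Q \<in> sym_orbit N ?Q" by (rule sym_orbit_refl[OF N])
  have rotate: "four_block_seq N b c d a \<in> sym_orbit N ?Q"
    if "four_block_seq N a b c d \<in> sym_orbit N ?Q" "0 < a" "0 < b" "0 < c" "0 < d" "a + b + c + d = N"
    for a b c d
    using sym_orbit_trans[OF N four_block_seq_rotate that(1)] that(2-) by simp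
  have r1: "four_block_seq N h1 h2 h3 h0 \<in> sym_orbit N ?Q" using rotate[OF r0 h] .
  have r2: "four_block_seq N h2 h3 h0 h1 \<in> sym_orbit N ?Q" using rotate[OF r1] h by simp
  have r3: "four_block_seq N h3 h0 h1 h2 \<in> sym_orbit N ?Q" using rotate[OF r2] h by simp
  have f0: "four_block_seq N h3 h2 h1 h0 \<in> sym_orbit N ?Q" using four_block_seq_reflect[OF h] .
  have f1: "four_block_seq N h2 h1 h0 h3 \<in> sym_orbit N ?Q" using rotate[OF f0] h by simp
  have f2: "four_block_seq N h1 h0 h3 h2 \<in> sym_orbit N ?Q" using rotate[OF f1] h by simp
  have f3: "four_block_seq N h0 h3 h2 h1 \<in> sym_orbit N ?Q" using rotate[OF f2] h by simp
  show ?thesis using assms(7) r0 r1 r2 r3 f0 f1 f2 f3 by (auto simp: dihedral_gaps_def)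
qed

lemma mset2_eq_cases: "{#a, b#} = {#x, y#} \<Longrightarrow> (x = a \<and> y = b) \<or> (x = b \<and> y = a)"
proof -
  assume eq: "{#a, b#} = {#x, y#}"
  then have "x \<in># {#a, b#}" by simp
  then have "x = a \<or> x = b" by auto
  then show ?thesis using eq by (auto simp: add_mset_commute)
qed

lemma mset3_eq_cases:
  "{#a, b, c#} = {#x, y, z#} \<Longrightarrow>
     (x = a \<and> {#b, c#} = {#y, z#}) \<or> (x = b \<and> {#a, c#} = {#y, z#}) \<or> (x = c \<and> {#a, b#} = {#y, z#})"
proof -
  assume eq: "{#a, b, c#} = {#x, y, z#}"
  then have "x \<in># {#a, b, c#}" by simp
  then have "x = a \<or> x = b \<or> x = c" by auto
  moreover have "{#a, b, c#} = add_mset b {#a, c#}" "{#a, b, c#} = add_mset c {#a, b#}"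
    by (simp_all add: add_mset_commute)
  ultimately show ?thesis using eq by (metis add_mset_remove_trivial)
qed

lemma mset4_eq_cases:
  "{#a, b, c, d#} = {#x, y, z, w#} \<Longrightarrow>
     (x = a \<and> {#b, c, d#} = {#y, z, w#}) \<or> (x = b \<and> {#a, c, d#} = {#y, z, w#}) \<or>
     (x = c \<and> {#a, b, d#} = {#y, z, w#}) \<or> (x = d \<and> {#a, b, c#} = {#y, z, w#})"
proof -
  assume eq: "{#a, b, c, d#} = {#x, y, z, w#}"
  then have "x \<in># {#a, b, c, d#}" by simp
  then have "x = a \<or> x = b \<or> x = c \<or> x = d" by auto
  moreover have "{#a, b, c, d#} = add_mset b {#a, c, d#}" "{#a, b, c, d#} = add_mset c {#a, b, d#}"
    "{#a, b, c, d#} = add_mset d {#a, b, c#}"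
    by (simp_all add: add_mset_commute)
  ultimately show ?thesis using eq by (metis add_mset_remove_trivial)
qed

lemma gaps_in_dihedral:
  fixes g0 g1 g2 g3 h0 h1 h2 h3 :: nat
  assumes "{#h0, h1, h2, h3#} = {#g0, g1, g2, g3#}"
    and "(g0 + g2 = h0 + h2 \<and> g1 + g3 = h1 + h3) \<or> (g0 + g2 = h1 + h3 \<and> g1 + g3 = h0 + h2)"
  shows "(g0, g1, g2, g3) \<in> dihedral_gaps h0 h1 h2 h3"
  unfolding dihedral_gaps_def
  by (insert mset4_eq_cases[OF assms(1)] assms(2))
    (elim disjE conjE; drule mset3_eq_cases; elim disjE conjE; drule mset2_eq_cases;
      elim disjE conjE; simp; linarith)

lemma four_block_case:
  assumes N: "0 < N" and \<tau>: "\<tau> \<in> GF N" and \<sigma>: "\<sigma> \<in> GF N"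
    and "card (sign_changes N \<tau>) = 4" "card (sign_changes N \<sigma>) = 4"
    and eq: "acorr N \<tau> = acorr N \<sigma>"
  shows "\<tau> \<in> sym_orbit N \<sigma>"
proof -
  obtain g0 g1 g2 g3 where g: "0 < g0" "0 < g1" "0 < g2" "0 < g3" "g0 + g1 + g2 + g3 = N"
    and \<tau>g: "four_block_seq N g0 g1 g2 g3 \<in> sym_orbit N \<tau>"
    using four_block_seq_in_sym_orbit[OF N \<tau> assms(4)] by blast
  obtain h0 h1 h2 h3 where h: "0 < h0" "0 < h1" "0 < h2" "0 < h3" "h0 + h1 + h2 + h3 = N"
    and \<sigma>h: "four_block_seq N h0 h1 h2 h3 \<in> sym_orbit N \<sigma>"
    using four_block_seq_in_sym_orbit[OF N \<sigma> assms(5)] by blast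
  let ?P = "four_block_seq N g0 g1 g2 g3" and ?Q = "four_block_seq N h0 h1 h2 h3"
  have acorr_PQ: "acorr N ?P = acorr N ?Q"
    using acorr_sym_orbit[OF N \<tau>g] acorr_sym_orbit[OF N \<sigma>h] eq by simp
  then have "diff_corr N ?P = diff_corr N ?Q"
    by (simp add: fun_eq_iff diff_corr_acorr[OF N])
  then have gap_poly_eq: "gap_poly g0 g1 g2 g3 = gap_poly h0 h1 h2 h3"
    by (rule gap_poly_eq_if_diff_corr_eq[OF g h])
  have "(int g0 - int g1 + int g2 - int g3)\<^sup>2 = (int h0 - int h1 + int h2 - int h3)\<^sup>2"
    using sum_square_eq_if_acorr_eq[OF N acorr_PQ] by (simp add: sum_four_block_seq g(5) h(5))
  then have pairing: "(g0 + g2 = h0 + h2 \<and> g1 + g3 = h1 + h3) \<or> (g0 + g2 = h1 + h3 \<and> g1 + g3 = h0 + h2)"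
    using g(5) h(5) unfolding power2_eq_iff by linarith
  then have "(1 + monom (1::int) (g0 + g2)) * (1 + monom 1 (g1 + g3)) = (1 + monom 1 (h0 + h2)) * (1 + monom 1 (h1 + h3))"
    by (auto simp: mult.commute)
  then have "gap_prod {#h0, h1, h2, h3#} = gap_prod {#g0, g1, g2, g3#}"
    unfolding gap_poly_add[symmetric] gap_poly_eq by simp
  then have "{#h0, h1, h2, h3#} = {#g0, g1, g2, g3#}"
    by (rule gap_prod_inj[rotated 2]) (use g h in auto)
  then have "(g0, g1, g2, g3) \<in> dihedral_gaps h0 h1 h2 h3"
    using pairing by (rule gaps_in_dihedral)
  then have "?P \<in> sym_orbit N ?Q"
    by (rule four_block_seq_dihedral[OF N h])
  then show ?thesis
    using sym_orbit_trans[OF N sym_orbit_sym[OF N \<tau> \<tau>g]] sym_orbit_trans[OF N _ \<sigma>h] by blast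
qed

section \<open>Stabilizer classes of sequences with at most four blocks\<close>

lemma stab_class_eq_sym_orbit:
  assumes N: "0 < N" and \<sigma>: "\<sigma> \<in> GF N" and blocks: "card (sign_changes N \<sigma>) \<in> {0, 2, 4}"
  shows "{\<tau> \<in> GF N. autocorr N \<tau> = autocorr N \<sigma>} = sym_orbit N \<sigma>"
proof
  show "sym_orbit N \<sigma> \<subseteq> {\<tau> \<in> GF N. autocorr N \<tau> = autocorr N \<sigma>}"
    using sym_orbit_subset_GF[OF N \<sigma>] acorr_sym_orbit[OF N] autocorr_eq_iff_acorr_eq[OF N] by blast
next
  show "{\<tau> \<in> GF N. autocorr N \<tau> = autocorr N \<sigma>} \<subseteq> sym_orbit N \<sigma>"
  proof clarify
    fix \<tau> assume \<tau>: "\<tau> \<in> GF N" and "autocorr N \<tau> = autocorr N \<sigma>"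
    then have eq: "acorr N \<tau> = acorr N \<sigma>" using autocorr_eq_iff_acorr_eq[OF N] by blast
    then have same: "card (sign_changes N \<tau>) = card (sign_changes N \<sigma>)"
      using acorr_one[OF N \<tau>] acorr_one[OF N \<sigma>] by simp
    consider "card (sign_changes N \<sigma>) = 0" | "card (sign_changes N \<sigma>) = 2"
      | "card (sign_changes N \<sigma>) = 4"
      using blocks by auto
    then show "\<tau> \<in> sym_orbit N \<sigma>"
    proof cases
      case 1
      then show ?thesis
        using sym_orbit_trans[OF N sym_orbit_sym[OF N \<tau>] const_seq_in_sym_orbit[OF N \<sigma>]]
          const_seq_in_sym_orbit[OF N \<tau>] same by simp
    next
      case 2
      then show ?thesis using two_block_case[OF N \<tau> \<sigma> _ _ eq] same by simp
    next
      case 3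
      then show ?thesis using four_block_case[OF N \<tau> \<sigma> _ _ eq] same by simp
    qed
  qed
qed

theorem mainTheorem11:
  fixes N :: nat and \<sigma> :: "nat \<Rightarrow> int"
  assumes "0 < N"
    and "\<sigma> \<in> GF N"
    and "num_blocks N \<sigma> \<le> 4"
  shows "D_stab N \<sigma> = D_sym N \<sigma>"
proof -
  have "card (sign_changes N \<sigma>) \<in> {0, 2, 4}"
    using even_card_sign_changes[OF assms(1,2)] assms(3) unfolding num_blocks_eq_card
    by (auto elim!: evenE)
  then show ?thesis
    unfolding D_stab_def D_sym_def using stab_class_eq_sym_orbit[OF assms(1,2)] by simp
qed

end
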